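(* Let $A$ be the $N\times N$ extended Cartan matrix of one of the affine extensions $A_4^=$, $D_6^>$, $D_6^=$, $D_6^<$, $E_8^=$ (so $N=5,7,7,7,9$). Let $B=\begin{pmatrix}2&v^T\\ w&A\end{pmatrix}$ be an $(N+1)\times(N+1)$ matrix with $v,w\in\mathbb{Z}^N$ such that $v_i\le 0$ and $w_i\le0$ for all $i$, $v_i=0$ if and only if $w_i=0$, and $\det B=0$ (i.e. $B$ is a Kac–Moody-type affine extension of $A$ by one further node). Then $v=w=0$, i.e. the additional node is disconnected from the diagram.
   Context: The Cartan matrix of a simply-laced Dynkin diagram has diagonal entries $2$, entry $-1$ for joined nodes and $0$ otherwise. The extended Cartan matrices are (indices $0,\dots,n$): $A_4^=$: simply-laced cycle $0-1-2-3-4-0$. $D_6^=$: simply-laced diagram with chain $1-2-3-4-5$, node $6$ joined to $4$, node $0$ joined to $2$. $D_6^<$: the $D_6$ part (chain $1-2-3-4-5$, node $6$ joined to $4$, simply laced) together with node $0$ where $A_{01}=-2$, $A_{10}=-1$ and $A_{0j}=A_{j0}=0$ for $j\ge2$. $D_6^>$: same as $D_6^<$ but with $A_{01}=-1$, $A_{10}=-2$. $E_8^=$: simply-laced diagram with chain $0-1-2-3-4-5-6-7$ and node $8$ joined to node $5$. *)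

theory Defs
  imports "Jordan_Normal_Form.Determinant"
begin

definition simply_laced_cartan :: "nat \<Rightarrow> (nat \<times> nat) set \<Rightarrow> int mat" where
  "simply_laced_cartan n E = mat n n (\<lambda>(i,j). if i = j then 2
      else if (i,j) \<in> E \<or> (j,i) \<in> E then -1 else 0)"

definition cartan_A4_eq :: "int mat" where
  "cartan_A4_eq = simply_laced_cartan 5 {(0,1),(1,2),(2,3),(3,4),(4,0)}"

definition cartan_D6_eq :: "int mat" where
  "cartan_D6_eq = simply_laced_cartan 7 {(1,2),(2,3),(3,4),(4,5),(6,4),(0,2)}"

definition cartan_D6_node0 :: "int \<Rightarrow> int \<Rightarrow> int mat" where
  "cartan_D6_node0 a b = mat 7 7 (\<lambda>(i,j).
      if (i,j) = (0,1) then a else if (i,j) = (1,0) then b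
      else simply_laced_cartan 7 {(1,2),(2,3),(3,4),(4,5),(6,4)} $$ (i,j))"

definition cartan_D6_lt :: "int mat" where
  "cartan_D6_lt = cartan_D6_node0 (-2) (-1)"

definition cartan_D6_gt :: "int mat" where
  "cartan_D6_gt = cartan_D6_node0 (-1) (-2)"

definition cartan_E8_eq :: "int mat" where
  "cartan_E8_eq = simply_laced_cartan 9
     {(0,1),(1,2),(2,3),(3,4),(4,5),(5,6),(6,7),(8,5)}"

text \<open>The (N+1)x(N+1) block matrix B = [[2, v^T],[w, A]]; the new node has index 0,
  node i of A becomes index i+1.\<close>
definition extend_matrix :: "int mat \<Rightarrow> int vec \<Rightarrow> int vec \<Rightarrow> int mat" where
  "extend_matrix A v w = mat (dim_row A + 1) (dim_col A + 1) (\<lambda>(i,j).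
      if i = 0 \<and> j = 0 then 2
      else if i = 0 then v $ (j - 1)
      else if j = 0 then w $ (i - 1)
      else A $$ (i - 1, j - 1))"

end

theory Submission
  imports Defs
begin

text \<open>A null vector \<open>(x\<^sub>0, y)\<close> of \<open>B\<close> satisfies \<open>2 x\<^sub>0 + v \<bullet> y = 0\<close> and
  \<open>x\<^sub>0 w + A y = 0\<close>. If \<open>x\<^sub>0 = 0\<close>, then \<open>y\<close> is a nonzero multiple of the positive
  kernel vector \<open>d\<close> of the affine matrix \<open>A\<close>, so \<open>v \<bullet> d = 0\<close>, which forces \<open>v = 0\<close>
  because \<open>v \<le> 0\<close>. If \<open>x\<^sub>0 \<noteq> 0\<close>, pairing with the positive left null vector \<open>c\<close> of
  \<open>A\<close> gives \<open>x\<^sub>0 (c \<bullet> w) = 0\<close> and hence \<open>w = 0\<close>. Since \<open>v\<close> and \<open>w\<close> have the same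
  support, both vanish.\<close>

lemma scalar_prod_positive_nonpos_eq_0_imp_zero:
  fixes c u :: "'a :: linordered_idom vec"
  assumes c: "c \<in> carrier_vec n" and u: "u \<in> carrier_vec n"
    and c_pos: "\<forall>i<n. 0 < c $ i" and u_nonpos: "\<forall>i<n. u $ i \<le> 0"
    and orth: "c \<bullet> u = 0"
  shows "u = 0\<^sub>v n"
proof -
  have "(\<Sum>i\<in>{0..<n}. - (c $ i * u $ i)) = 0"
    using orth u by (simp add: scalar_prod_def sum_negf)
  moreover have "\<forall>i\<in>{0..<n}. 0 \<le> - (c $ i * u $ i)"
    using c_pos u_nonpos by (simp add: mult_nonneg_nonpos less_imp_le)
  ultimately have "\<forall>i<n. c $ i * u $ i = 0"
    using sum_nonneg_eq_0_iff[of "{0..<n}" "\<lambda>i. - (c $ i * u $ i)"] by fastforce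
  then show ?thesis
    using c_pos u by (intro eq_vecI) (auto simp: less_le)
qed

lemma extend_matrix_carrier:
  "A \<in> carrier_mat N N \<Longrightarrow> extend_matrix A v w \<in> carrier_mat (Suc N) (Suc N)"
  by (simp add: extend_matrix_def)

lemma extend_matrix_mult_vCons:
  assumes A: "A \<in> carrier_mat N N" and v: "v \<in> carrier_vec N" and w: "w \<in> carrier_vec N"
    and y: "y \<in> carrier_vec N"
  shows "extend_matrix A v w *\<^sub>v vCons x0 y = vCons (2 * x0 + v \<bullet> y) (x0 \<cdot>\<^sub>v w + A *\<^sub>v y)"
proof -
  have "row (extend_matrix A v w) 0 = vCons 2 v"
    using A v by (intro eq_vecI) (auto simp: extend_matrix_def vec_index_vCons)
  moreover have "row (extend_matrix A v w) (Suc i) = vCons (w $ i) (row A i)" if "i < N" for i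
    using A w that by (intro eq_vecI) (auto simp: extend_matrix_def vec_index_vCons)
  moreover have "extend_matrix A v w \<in> carrier_mat (Suc N) (Suc N)"
    using A by (rule extend_matrix_carrier)
  ultimately show ?thesis
    using A v w y
    by (intro eq_vecI) (auto simp: mult.commute less_Suc_eq_0_disj)
qed

text \<open>For an affine Cartan matrix, \<open>d\<close> and \<open>c\<close> are Kac's marks and comarks: the
  coefficients of the null root and of the canonical central element.\<close>
definition affine_labels :: "int mat \<Rightarrow> int vec \<Rightarrow> int vec \<Rightarrow> bool" where
  "affine_labels A c d \<longleftrightarrow> A \<in> carrier_mat (dim_vec d) (dim_vec d) \<and> c \<in> carrier_vec (dim_vec d)
     \<and> (\<forall>i<dim_vec d. 0 < c $ i \<and> 0 < d $ i)
     \<and> transpose_mat A *\<^sub>v c = 0\<^sub>v (dim_vec d)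
     \<and> (\<forall>z \<in> carrier_vec (dim_vec d). A *\<^sub>v z = 0\<^sub>v (dim_vec d) \<longrightarrow> (\<exists>t. z = t \<cdot>\<^sub>v d))"

lemma affine_labelsI:
  assumes A: "A \<in> carrier_mat n n" and c: "c \<in> carrier_vec n" and d: "d \<in> carrier_vec n"
    and pos: "\<forall>i<n. 0 < c $ i \<and> 0 < d $ i"
    and left_null: "\<forall>j<n. (\<Sum>i<n. c $ i * A $$ (i, j)) = 0"
    and kernel: "\<And>z. \<forall>i<n. (\<Sum>j<n. A $$ (i, j) * z j) = 0 \<Longrightarrow> \<exists>t. \<forall>j<n. z j = t * d $ j"
  shows "affine_labels A c d"
proof -
  have "transpose_mat A *\<^sub>v c = 0\<^sub>v n"
    using A c left_null
    by (intro eq_vecI) (auto simp: mult_mat_vec_def scalar_prod_def atLeast0LessThan mult.commute)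
  moreover have "\<exists>t. z = t \<cdot>\<^sub>v d" if z: "z \<in> carrier_vec n" and Az: "A *\<^sub>v z = 0\<^sub>v n" for z
  proof -
    have "\<forall>i<n. (\<Sum>j<n. A $$ (i, j) * z $ j) = 0"
    proof (intro allI impI)
      fix i assume "i < n"
      then have "(A *\<^sub>v z) $ i = 0" using Az by simp
      then show "(\<Sum>j<n. A $$ (i, j) * z $ j) = 0"
        using \<open>i < n\<close> A z by (simp add: mult_mat_vec_def scalar_prod_def atLeast0LessThan)
    qed
    then obtain t where "\<forall>j<n. z $ j = t * d $ j" using kernel by blast
    then have "z = t \<cdot>\<^sub>v d" using z d by (intro eq_vecI) auto
    then show ?thesis ..
  qed
  ultimately show ?thesis using A c d pos unfolding affine_labels_def by auto
qed

lemma det_extend_matrix_eq_0_imp_disconnected: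
  assumes labels: "affine_labels A c d" and A: "A \<in> carrier_mat N N"
    and v: "v \<in> carrier_vec N" and w: "w \<in> carrier_vec N"
    and nonpos: "\<forall>i<N. v $ i \<le> 0 \<and> w $ i \<le> 0"
    and same_support: "\<forall>i<N. v $ i = 0 \<longleftrightarrow> w $ i = 0"
    and singular: "det (extend_matrix A v w) = 0"
  shows "v = 0\<^sub>v N \<and> w = 0\<^sub>v N"
proof -
  have d: "d \<in> carrier_vec N" using labels A unfolding affine_labels_def by auto
  with labels have c: "c \<in> carrier_vec N" and pos: "\<forall>i<N. 0 < c $ i \<and> 0 < d $ i"
    and left_null: "transpose_mat A *\<^sub>v c = 0\<^sub>v N"
    and kernel: "\<And>z. z \<in> carrier_vec N \<Longrightarrow> A *\<^sub>v z = 0\<^sub>v N \<Longrightarrow> \<exists>t. z = t \<cdot>\<^sub>v d"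
    unfolding affine_labels_def by auto
  obtain x where x: "x \<in> carrier_vec (Suc N)" "x \<noteq> 0\<^sub>v (Suc N)"
    and Bx: "extend_matrix A v w *\<^sub>v x = 0\<^sub>v (Suc N)"
    using det_0_iff_vec_prod_zero[OF extend_matrix_carrier[OF A]] singular by blast
  then obtain x0 y where x_def: "x = vCons x0 y" and y: "y \<in> carrier_vec N"
    by (cases x) auto
  from Bx have row0: "2 * x0 + v \<bullet> y = 0" and rows: "x0 \<cdot>\<^sub>v w + A *\<^sub>v y = 0\<^sub>v N"
    unfolding x_def extend_matrix_mult_vCons[OF A v w y] zero_vec_Suc by auto
  have "v = 0\<^sub>v N \<or> w = 0\<^sub>v N"
  proof (cases "x0 = 0")
    case True
    then have "x0 \<cdot>\<^sub>v w = 0\<^sub>v N" using w by (auto intro!: eq_vecI)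
    with rows A y have "A *\<^sub>v y = 0\<^sub>v N" by simp
    then obtain t where t: "y = t \<cdot>\<^sub>v d" using kernel y by blast
    have "t \<noteq> 0" using x(2) True t d unfolding x_def zero_vec_Suc by auto
    moreover have "t * (d \<bullet> v) = 0"
      using row0 True t d v by (simp add: comm_scalar_prod[of d N v])
    ultimately have "d \<bullet> v = 0" by simp
    then show ?thesis
      using scalar_prod_positive_nonpos_eq_0_imp_zero[OF d v] pos nonpos by auto
  next
    case False
    have "c \<bullet> (A *\<^sub>v y) = 0"
      using transpose_vec_mult_scalar[OF A y c] left_null y by simp
    then have "x0 * (c \<bullet> w) = c \<bullet> (x0 \<cdot>\<^sub>v w + A *\<^sub>v y)"
      using c w A y by (simp add: scalar_prod_add_distrib)
    also have "\<dots> = 0" using rows c by simp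
    finally have "c \<bullet> w = 0" using False by simp
    then show ?thesis
      using scalar_prod_positive_nonpos_eq_0_imp_zero[OF c w] pos nonpos by auto
  qed
  then show ?thesis
    using same_support v w by (auto intro!: eq_vecI)
qed

lemma affine_labels_cartan_A4_eq:
  "affine_labels cartan_A4_eq (vec_of_list [1,1,1,1,1]) (vec_of_list [1,1,1,1,1])"
  by (rule affine_labelsI[where n=5])
    (simp_all add: cartan_A4_eq_def simply_laced_cartan_def
      eval_nat_numeral less_Suc_eq all_conj_distrib vec_of_list_index)

lemma affine_labels_cartan_D6_eq:
  "affine_labels cartan_D6_eq (vec_of_list [1,1,2,2,2,1,1]) (vec_of_list [1,1,2,2,2,1,1])"
  by (rule affine_labelsI[where n=7])
    (simp_all add: cartan_D6_eq_def simply_laced_cartan_def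
      eval_nat_numeral less_Suc_eq all_conj_distrib vec_of_list_index)

lemma affine_labels_cartan_D6_lt:
  "affine_labels cartan_D6_lt (vec_of_list [1,2,2,2,2,1,1]) (vec_of_list [2,2,2,2,2,1,1])"
  by (rule affine_labelsI[where n=7])
    (simp_all add: cartan_D6_lt_def cartan_D6_node0_def simply_laced_cartan_def
      eval_nat_numeral less_Suc_eq all_conj_distrib vec_of_list_index)

lemma affine_labels_cartan_D6_gt:
  "affine_labels cartan_D6_gt (vec_of_list [2,2,2,2,2,1,1]) (vec_of_list [1,2,2,2,2,1,1])"
  by (rule affine_labelsI[where n=7])
    (simp_all add: cartan_D6_gt_def cartan_D6_node0_def simply_laced_cartan_def
      eval_nat_numeral less_Suc_eq all_conj_distrib vec_of_list_index)

lemma affine_labels_cartan_E8_eq: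
  "affine_labels cartan_E8_eq (vec_of_list [1,2,3,4,5,6,4,2,3]) (vec_of_list [1,2,3,4,5,6,4,2,3])"
  by (rule affine_labelsI[where n=9])
    (simp_all add: cartan_E8_eq_def simply_laced_cartan_def
      eval_nat_numeral less_Suc_eq all_conj_distrib vec_of_list_index)

theorem mainTheorem3:
  fixes A :: "int mat" and v w :: "int vec" and N :: nat
  assumes "A \<in> {cartan_A4_eq, cartan_D6_gt, cartan_D6_eq, cartan_D6_lt, cartan_E8_eq}"
    and "A \<in> carrier_mat N N"
    and "v \<in> carrier_vec N" and "w \<in> carrier_vec N"
    and "\<forall>i<N. v $ i \<le> 0 \<and> w $ i \<le> 0"
    and "\<forall>i<N. v $ i = 0 \<longleftrightarrow> w $ i = 0"
    and "det (extend_matrix A v w) = 0"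
  shows "v = 0\<^sub>v N \<and> w = 0\<^sub>v N"
proof -
  obtain c d where "affine_labels A c d"
    using assms(1) affine_labels_cartan_A4_eq affine_labels_cartan_D6_gt affine_labels_cartan_D6_eq
      affine_labels_cartan_D6_lt affine_labels_cartan_E8_eq
    by blast
  then show ?thesis
    using det_extend_matrix_eq_0_imp_disconnected assms(2-) by blast
qed

end
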